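(* Let $\mathcal{H}$ be a $d$-dimensional Hilbert space, let $\mathcal{A}$ be an observable on $\mathcal{H}$ with orthonormal eigenbasis $\{|k\rangle\}_{k=0}^{d-1}$, and let $\rho_t$ be a family of density operators on $\mathcal{H}$ evolving under an arbitrary dynamics (in the Schrödinger picture) such that $\sqrt{\rho_t}$ is differentiable in $t$. Then for every $T>0$, the time needed to go from coherence $C(\rho_0,\mathcal{A})$ to $C(\rho_T,\mathcal{A})$ satisfies $$T\ \geq\ T_C=\frac{\sqrt{2}\,\bigl|\sqrt{C(\rho_0,\mathcal{A})}-\sqrt{C(\rho_T,\mathcal{A})}\bigr|}{\Bigl\langle\!\Bigl\langle \sqrt{\sum_{k=0}^{d-1}\lVert[\partial_t\sqrt{\rho_t},|k\rangle\langle k|]\rVert_{\rm HS}^2}\Bigr\rangle\!\Bigr\rangle_T}$$ (whenever the time average in the denominator is nonzero).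
   Context: The skew-information-based coherence of a state $\rho$ in the eigenbasis $\{|k\rangle\}$ of $\mathcal{A}$ is $C(\rho,\mathcal{A})=\sum_{k=0}^{d-1}I(\rho,|k\rangle\langle k|)=\frac12\sum_{k}\lVert[\sqrt{\rho},|k\rangle\langle k|]\rVert_{\rm HS}^2$, where $I(\rho,X)=\frac12\lVert[\sqrt\rho,X]\rVert_{\rm HS}^2$ is the skew information, $[X,Y]=XY-YX$, and $\lVert O\rVert_{\rm HS}=\sqrt{\operatorname{tr}(O^\dagger O)}$. For a function $X_t$, $\langle\!\langle X_t\rangle\!\rangle_T=\frac{1}{T}\int_0^T X_t\,dt$. *)

theory Defs
  imports "HOL-Analysis.Analysis"
begin

text \<open>Operators on a d-dimensional Hilbert space are modelled as complex matrices
  indexed by a finite type 'n (d = CARD('n)), vectors as complex^'n.\<close>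

definition cinner :: "complex^'n \<Rightarrow> complex^'n \<Rightarrow> complex" where
  "cinner u v = (\<Sum>i\<in>UNIV. cnj (u $ i) * v $ i)"

definition adj :: "complex^'n^'n \<Rightarrow> complex^'n^'n" where
  "adj A = (\<chi> i j. cnj (A $ j $ i))"

definition hermitian :: "complex^'n^'n \<Rightarrow> bool" where
  "hermitian A \<longleftrightarrow> adj A = A"

definition psd :: "complex^'n^'n \<Rightarrow> bool" where
  "psd A \<longleftrightarrow> hermitian A \<and> (\<forall>v. 0 \<le> Re (cinner v (A *v v)))"

definition density_op :: "complex^'n^'n \<Rightarrow> bool" where
  "density_op A \<longleftrightarrow> psd A \<and> trace A = 1"

definition matrix_sqrt :: "complex^'n^'n \<Rightarrow> complex^'n^'n" where
  "matrix_sqrt A = (THE B. psd B \<and> B ** B = A)"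

definition commutator :: "complex^'n^'n \<Rightarrow> complex^'n^'n \<Rightarrow> complex^'n^'n" where
  "commutator X Y = X ** Y - Y ** X"

definition hs_norm :: "complex^'n^'n \<Rightarrow> real" where
  "hs_norm O' = sqrt (Re (trace (adj O' ** O')))"

definition proj :: "complex^'n \<Rightarrow> complex^'n^'n" where
  "proj v = (\<chi> i j. v $ i * cnj (v $ j))"

definition skew_info :: "complex^'n^'n \<Rightarrow> complex^'n^'n \<Rightarrow> real" where
  "skew_info \<rho> X = 1/2 * (hs_norm (commutator (matrix_sqrt \<rho>) X))\<^sup>2"

definition coherence :: "complex^'n^'n \<Rightarrow> ('n \<Rightarrow> complex^'n) \<Rightarrow> real" where
  "coherence \<rho> e = (\<Sum>k\<in>UNIV. skew_info \<rho> (proj (e k)))"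

definition orthonormal_basis :: "('n \<Rightarrow> complex^'n) \<Rightarrow> bool" where
  "orthonormal_basis e \<longleftrightarrow> (\<forall>j k. cinner (e j) (e k) = (if j = k then 1 else 0))"

definition eigenbasis_of :: "complex^'n^'n \<Rightarrow> ('n \<Rightarrow> complex^'n) \<Rightarrow> bool" where
  "eigenbasis_of A e \<longleftrightarrow> orthonormal_basis e \<and> (\<forall>k. \<exists>c. A *v e k = c *s e k)"

end

theory Submission
  imports Defs
begin

text \<open>Stack the commutators [X, |k><k|] into one vector of matrices \<open>\<Gamma> X\<close>. The map \<open>\<Gamma>\<close> is
  linear, \<open>2 C(\<rho>) = \<parallel>\<Gamma> (\<surd>\<rho>)\<parallel>\<^sup>2\<close> and the integrand of the theorem is \<open>\<parallel>\<Gamma> (\<partial>\<^sub>t\<surd>\<rho>\<^sub>t)\<parallel>\<close>.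
  Hence \<open>\<surd>2 |\<surd>C(\<rho>\<^sub>0) - \<surd>C(\<rho>\<^sub>T)|\<close> is the change of the length of the curve \<open>\<Gamma> (\<surd>\<rho>\<^sub>t)\<close>,
  which is at most its arc length \<open>\<integral>\<^sub>0\<^sup>T \<parallel>\<partial>\<^sub>t \<Gamma> (\<surd>\<rho>\<^sub>t)\<parallel> dt\<close>, i.e. T times the time average.\<close>

lemma abs_norm_diff_le_integral_norm_derivative:
  fixes f :: "real \<Rightarrow> 'a::banach"
  assumes "a \<le> b"
    and "\<And>t. t \<in> {a..b} \<Longrightarrow> (f has_vector_derivative f' t) (at t within {a..b})"
    and "(\<lambda>t. norm (f' t)) integrable_on {a..b}"
  shows "\<bar>norm (f b) - norm (f a)\<bar> \<le> integral {a..b} (\<lambda>t. norm (f' t))"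
proof -
  have "(f' has_integral f b - f a) {a..b}"
    using fundamental_theorem_of_calculus assms(1,2) by blast
  then have "norm (f b - f a) \<le> integral {a..b} (\<lambda>t. norm (f' t))"
    using integral_norm_bound_integral[of f' "{a..b}" "\<lambda>t. norm (f' t)"] assms(3)
    by (auto simp: has_integral_integrable_integral)
  then show ?thesis
    using norm_triangle_ineq3 by (rule order_trans[rotated])
qed

lemma hs_norm_eq_norm: "hs_norm (M::complex^'n^'n) = norm M"
proof -
  have "Re (trace (adj M ** M)) = (\<Sum>i\<in>UNIV. \<Sum>j\<in>UNIV. (cmod (M$j$i))\<^sup>2)"
    by (simp add: trace_def adj_def matrix_matrix_mult_def cmod_power2
        flip: power2_eq_square)
  also have "\<dots> = (\<Sum>j\<in>UNIV. \<Sum>i\<in>UNIV. (cmod (M$j$i))\<^sup>2)"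
    by (rule sum.swap)
  also have "\<dots> = (\<Sum>j\<in>UNIV. (norm (M$j))\<^sup>2)"
    by (simp add: norm_vec_def L2_set_def sum_nonneg)
  finally show ?thesis
    by (simp add: hs_norm_def norm_vec_def L2_set_def)
qed

definition commutators :: "complex^'n^'n \<Rightarrow> ('k \<Rightarrow> complex^'n^'n) \<Rightarrow> complex^'n^'n^'k" where
  "commutators X P = (\<chi> k. commutator X (P k))"

lemma bounded_linear_commutators: "bounded_linear (\<lambda>X. commutators X P)"
proof -
  have "linear (\<lambda>X. commutators X P)"
    by (rule linearI)
      (auto simp: commutators_def commutator_def vec_eq_iff matrix_matrix_mult_def
        sum_distrib_left sum.distrib algebra_simps scaleR_sum_right)
  then show ?thesis
    by (simp add: linear_conv_bounded_linear)
qed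

lemma norm_commutators:
  "norm (commutators X P) = sqrt (\<Sum>k\<in>UNIV. (hs_norm (commutator X (P k)))\<^sup>2)"
  by (simp add: commutators_def norm_vec_def L2_set_def hs_norm_eq_norm)

lemma sqrt_coherence:
  "sqrt 2 * sqrt (coherence \<rho> e) = norm (commutators (matrix_sqrt \<rho>) (\<lambda>k. proj (e k)))"
proof -
  have "coherence \<rho> e = (\<Sum>k\<in>UNIV. (hs_norm (commutator (matrix_sqrt \<rho>) (proj (e k))))\<^sup>2) / 2"
    by (simp add: coherence_def skew_info_def sum_divide_distrib)
  then show ?thesis
    by (simp add: norm_commutators real_sqrt_divide flip: real_sqrt_mult)
qed

lemma sqrt_coherence_change_le_integral:
  fixes \<rho> :: "real \<Rightarrow> complex^'n^'n" and e :: "'n \<Rightarrow> complex^'n" and a b :: real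
  defines "\<Gamma>' \<equiv> \<lambda>t. commutators
      (vector_derivative (\<lambda>s. matrix_sqrt (\<rho> s)) (at t within {a..b})) (\<lambda>k. proj (e k))"
  assumes "a \<le> b"
    and "\<forall>t\<in>{a..b}. (\<lambda>s. matrix_sqrt (\<rho> s)) differentiable (at t within {a..b})"
    and "(\<lambda>t. norm (\<Gamma>' t)) integrable_on {a..b}"
  shows "sqrt 2 * \<bar>sqrt (coherence (\<rho> a) e) - sqrt (coherence (\<rho> b) e)\<bar>
      \<le> integral {a..b} (\<lambda>t. norm (\<Gamma>' t))"
proof -
  define \<Gamma> where "\<Gamma> X = commutators X (\<lambda>k. proj (e k))" for X :: "complex^'n^'n"
  define S where "S = (\<lambda>s. matrix_sqrt (\<rho> s))"
  have "((\<lambda>t. \<Gamma> (S t)) has_vector_derivative \<Gamma>' t) (at t within {a..b})"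
    if "t \<in> {a..b}" for t
  proof -
    have "(S has_vector_derivative vector_derivative S (at t within {a..b})) (at t within {a..b})"
      using assms(3) that by (simp add: S_def flip: vector_derivative_works)
    then show ?thesis
      unfolding \<Gamma>_def \<Gamma>'_def S_def
      by (rule bounded_linear.has_vector_derivative[OF bounded_linear_commutators])
  qed
  then have arc_length: "\<bar>norm (\<Gamma> (S a)) - norm (\<Gamma> (S b))\<bar> \<le> integral {a..b} (\<lambda>t. norm (\<Gamma>' t))"
    using assms(2,4)
    by (subst abs_minus_commute) (intro abs_norm_diff_le_integral_norm_derivative; auto)
  have coherence_norm: "sqrt 2 * sqrt (coherence (\<rho> t) e) = norm (\<Gamma> (S t))" for t
    by (simp add: \<Gamma>_def S_def sqrt_coherence)
  have "sqrt 2 * \<bar>sqrt (coherence (\<rho> a) e) - sqrt (coherence (\<rho> b) e)\<bar>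
      = \<bar>sqrt 2 * sqrt (coherence (\<rho> a) e) - sqrt 2 * sqrt (coherence (\<rho> b) e)\<bar>"
    by (simp add: abs_mult flip: right_diff_distrib)
  also have "\<dots> \<le> integral {a..b} (\<lambda>t. norm (\<Gamma>' t))"
    unfolding coherence_norm by (rule arc_length)
  finally show ?thesis .
qed

theorem theorem2:
  fixes \<A> :: "complex^'n^'n" and e :: "'n \<Rightarrow> complex^'n"
    and \<rho> :: "real \<Rightarrow> complex^'n^'n" and T :: real
  assumes obs: "hermitian \<A>"
    and eig: "eigenbasis_of \<A> e"
    and dens: "\<forall>t. density_op (\<rho> t)"
    and T_pos: "T > 0"
    and diff: "\<forall>t\<in>{0..T}. (\<lambda>s. matrix_sqrt (\<rho> s)) differentiable (at t within {0..T})"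
    and integ: "(\<lambda>t. sqrt (\<Sum>k\<in>UNIV. (hs_norm (commutator
                   (vector_derivative (\<lambda>s. matrix_sqrt (\<rho> s)) (at t within {0..T}))
                   (proj (e k))))\<^sup>2)) integrable_on {0..T}"
    and nonzero: "(1 / T) * integral {0..T} (\<lambda>t. sqrt (\<Sum>k\<in>UNIV. (hs_norm (commutator
                   (vector_derivative (\<lambda>s. matrix_sqrt (\<rho> s)) (at t within {0..T}))
                   (proj (e k))))\<^sup>2)) \<noteq> 0"
  shows "T \<ge> sqrt 2 * \<bar>sqrt (coherence (\<rho> 0) e) - sqrt (coherence (\<rho> T) e)\<bar>
           / ((1 / T) * integral {0..T} (\<lambda>t. sqrt (\<Sum>k\<in>UNIV. (hs_norm (commutator
                   (vector_derivative (\<lambda>s. matrix_sqrt (\<rho> s)) (at t within {0..T}))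
                   (proj (e k))))\<^sup>2)))"
proof -
  define I where "I = integral {0..T} (\<lambda>t. norm (commutators
      (vector_derivative (\<lambda>s. matrix_sqrt (\<rho> s)) (at t within {0..T})) (\<lambda>k. proj (e k))))"
  note integrand = norm_commutators[symmetric]
  have bound: "sqrt 2 * \<bar>sqrt (coherence (\<rho> 0) e) - sqrt (coherence (\<rho> T) e)\<bar> \<le> I"
    unfolding I_def using T_pos diff integ
    by (intro sqrt_coherence_change_le_integral) (simp_all add: integrand)
  have "I \<noteq> 0"
    using nonzero T_pos by (simp add: integrand I_def)
  moreover have "I \<ge> 0"
    unfolding I_def using integ by (intro integral_nonneg) (simp_all add: integrand)
  ultimately have "I > 0" by simp
  with bound T_pos show ?thesis
    by (simp add: integrand flip: I_def) (simp add: field_simps)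
qed

end
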